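(* Let $(P,\leq,{}',M,R,0,1)$ be an operator residuated poset satisfying operator divisibility, and assume that for all $x,y\in P$ $M(x,y)=L(U(x,y'),y)$ and $R(x,y)=LU(x',L(x,y))$. Then $(P,\leq,{}',0,1)$ is a generalized orthomodular poset.
   Context: For a poset $(P,\leq)$ and $A\subseteq P$: $L(A):=\{x\in P\mid x\leq a\text{ for all }a\in A\}$, $U(A):=\{x\in P\mid a\leq x\text{ for all }a\in A\}$; $L(a,b)=L(\{a,b\})$, $L(a,B)=L(\{a\}\cup B)$, $LU(A)=L(U(A))$, and similarly for $U$. An orthoposet is a bounded poset $(P,\leq,{}',0,1)$ with a unary operation $'$ that is an antitone involution ($x''=x$; $x\leq y\Rightarrow y'\leq x'$) and a complementation ($L(x,x')=\{0\}$, $U(x,x')=\{1\}$). A generalized orthomodular poset is an orthoposet such that for all $x,y$, $x\leq y$ implies $U(y)=U(x,L(x',y))$. An operator residuated poset is a tuple $(P,\leq,{}',M,R,0,1)$ where $(P,\leq,0,1)$ is a bounded poset, $'$ an antitone unary operation, and $M,R:P^2\to 2^P$ satisfy for all $x,y,z\in P$: $M(x,y)\subseteq L(z)$ iff $L(x)\subseteq R(y,z)$; $R(x,0)=L(x')$; $R(x,x'')=R(x'',x)=P$. It satisfies operator divisibility if $x\leq y$ implies $L(y,U(R(y,x)))=L(x)$. *)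

theory Defs
  imports Main
begin

definition Lo :: "('a \<Rightarrow> 'a \<Rightarrow> bool) \<Rightarrow> 'a set \<Rightarrow> 'a set" where
  "Lo le A = {x. \<forall>a\<in>A. le x a}"

definition Up :: "('a \<Rightarrow> 'a \<Rightarrow> bool) \<Rightarrow> 'a set \<Rightarrow> 'a set" where
  "Up le A = {x. \<forall>a\<in>A. le a x}"

definition bounded_poset :: "('a \<Rightarrow> 'a \<Rightarrow> bool) \<Rightarrow> 'a \<Rightarrow> 'a \<Rightarrow> bool" where
  "bounded_poset le z t \<longleftrightarrow>
     (\<forall>x. le x x) \<and>
     (\<forall>x y. le x y \<and> le y x \<longrightarrow> x = y) \<and>
     (\<forall>x y w. le x y \<and> le y w \<longrightarrow> le x w) \<and>
     (\<forall>x. le z x \<and> le x t)"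

definition antitone_op :: "('a \<Rightarrow> 'a \<Rightarrow> bool) \<Rightarrow> ('a \<Rightarrow> 'a) \<Rightarrow> bool" where
  "antitone_op le c \<longleftrightarrow> (\<forall>x y. le x y \<longrightarrow> le (c y) (c x))"

definition orthoposet :: "('a \<Rightarrow> 'a \<Rightarrow> bool) \<Rightarrow> ('a \<Rightarrow> 'a) \<Rightarrow> 'a \<Rightarrow> 'a \<Rightarrow> bool" where
  "orthoposet le c z t \<longleftrightarrow>
     bounded_poset le z t \<and>
     (\<forall>x. c (c x) = x) \<and> antitone_op le c \<and>
     (\<forall>x. Lo le {x, c x} = {z} \<and> Up le {x, c x} = {t})"

definition generalized_orthomodular_poset ::
  "('a \<Rightarrow> 'a \<Rightarrow> bool) \<Rightarrow> ('a \<Rightarrow> 'a) \<Rightarrow> 'a \<Rightarrow> 'a \<Rightarrow> bool" where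
  "generalized_orthomodular_poset le c z t \<longleftrightarrow>
     orthoposet le c z t \<and>
     (\<forall>x y. le x y \<longrightarrow> Up le {y} = Up le ({x} \<union> Lo le {c x, y}))"

definition operator_residuated_poset ::
  "('a \<Rightarrow> 'a \<Rightarrow> bool) \<Rightarrow> ('a \<Rightarrow> 'a) \<Rightarrow> ('a \<Rightarrow> 'a \<Rightarrow> 'a set) \<Rightarrow>
   ('a \<Rightarrow> 'a \<Rightarrow> 'a set) \<Rightarrow> 'a \<Rightarrow> 'a \<Rightarrow> bool" where
  "operator_residuated_poset le c M R z t \<longleftrightarrow>
     bounded_poset le z t \<and> antitone_op le c \<and>
     (\<forall>x y w. M x y \<subseteq> Lo le {w} \<longleftrightarrow> Lo le {x} \<subseteq> R y w) \<and>
     (\<forall>x. R x z = Lo le {c x}) \<and>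
     (\<forall>x. R x (c (c x)) = UNIV \<and> R (c (c x)) x = UNIV)"

definition operator_divisibility ::
  "('a \<Rightarrow> 'a \<Rightarrow> bool) \<Rightarrow> ('a \<Rightarrow> 'a \<Rightarrow> 'a set) \<Rightarrow> bool" where
  "operator_divisibility le R \<longleftrightarrow>
     (\<forall>x y. le x y \<longrightarrow> Lo le ({y} \<union> Up le (R y x)) = Lo le {x})"

end

theory Submission
  imports Defs
begin

text \<open>The residuation law turns \<open>R x x'' = P\<close> and \<open>R x'' x = P\<close> into \<open>M 1 x \<subseteq> L(x'')\<close> and
  \<open>M 1 x'' \<subseteq> L(x)\<close>; as \<open>M 1 y = L(y)\<close> for the given \<open>M\<close>, the operation \<open>'\<close> is an involution.
  Then \<open>1 \<in> R x x = LU(x', L(x))\<close> forces \<open>U(x, x') = {1}\<close>, and divisibility for \<open>0 \<le> x\<close>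
  together with \<open>R x 0 = L(x')\<close> gives \<open>L(x, x') = {0}\<close>. Finally, let \<open>x \<le> y\<close> and let \<open>v\<close> be an
  upper bound of \<open>{x} \<union> L(x', y)\<close>. Every element of \<open>U(R x' y')\<close> lies above \<open>x\<close> and \<open>y'\<close>, so
  \<open>v'\<close> is a lower bound of \<open>{x'} \<union> U(R x' y')\<close>, and divisibility for \<open>y' \<le> x'\<close> yields
  \<open>v' \<le> y'\<close>, i.e. \<open>y \<le> v\<close>.\<close>

lemma Lo_iff: "w \<in> Lo le A \<longleftrightarrow> (\<forall>a\<in>A. le w a)"
  and Up_iff: "w \<in> Up le A \<longleftrightarrow> (\<forall>a\<in>A. le a w)"
  by (simp_all add: Lo_def Up_def)

locale operator_residuated =
  fixes le :: "'a \<Rightarrow> 'a \<Rightarrow> bool" (infix "\<preceq>" 50)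
    and c :: "'a \<Rightarrow> 'a" and M R :: "'a \<Rightarrow> 'a \<Rightarrow> 'a set" and z t :: 'a
  assumes operator_residuated_poset: "operator_residuated_poset le c M R z t"
begin

lemma bounded_poset: "bounded_poset le z t"
  and antitone: "x \<preceq> y \<Longrightarrow> c y \<preceq> c x"
  and residuation: "M x y \<subseteq> Lo le {w} \<longleftrightarrow> Lo le {x} \<subseteq> R y w"
  and R_bot: "R x z = Lo le {c x}"
  and R_double_compl: "R x (c (c x)) = UNIV" "R (c (c x)) x = UNIV"
  using operator_residuated_poset
  unfolding operator_residuated_poset_def antitone_op_def by blast+

lemma refl: "x \<preceq> x"
  and antisym: "x \<preceq> y \<Longrightarrow> y \<preceq> x \<Longrightarrow> x = y"
  and trans: "x \<preceq> y \<Longrightarrow> y \<preceq> w \<Longrightarrow> x \<preceq> w"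
  and bot_least: "z \<preceq> x"
  and top_greatest: "x \<preceq> t"
  using bounded_poset unfolding bounded_poset_def by blast+

lemma double_compl_eq:
  assumes mem_M_top: "\<And>y. y \<in> M t y"
  shows "c (c x) = x"
proof -
  have "M t x \<subseteq> Lo le {c (c x)}" "M t (c (c x)) \<subseteq> Lo le {x}"
    using residuation R_double_compl[of x] by blast+
  then have "x \<in> Lo le {c (c x)}" "c (c x) \<in> Lo le {x}"
    using mem_M_top by blast+
  then show ?thesis by (simp add: Lo_iff antisym)
qed

lemma divisibility_le:
  assumes "operator_divisibility le R" and "x \<preceq> y"
    and "w \<in> Lo le ({y} \<union> Up le (R y x))"
  shows "w \<preceq> x"
  using assms refl unfolding operator_divisibility_def by (auto simp: Lo_iff)

lemma Lo_compl_eq_bot: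
  assumes "operator_divisibility le R"
  shows "Lo le {x, c x} = {z}"
proof
  show "{z} \<subseteq> Lo le {x, c x}" by (simp add: Lo_iff bot_least)
  show "Lo le {x, c x} \<subseteq> {z}"
  proof
    fix w assume "w \<in> Lo le {x, c x}"
    then have "w \<in> Lo le ({x} \<union> Up le (R x z))"
      by (auto simp: Lo_iff Up_iff R_bot intro: trans)
    then have "w \<preceq> z" by (rule divisibility_le[OF assms bot_least])
    then show "w \<in> {z}" using antisym bot_least by blast
  qed
qed

lemma Up_compl_eq_top:
  assumes R_eq: "\<And>x y. R x y = Lo le (Up le ({c x} \<union> Lo le {x, y}))"
    and "t \<in> R x x"
  shows "Up le {x, c x} = {t}"
proof
  show "{t} \<subseteq> Up le {x, c x}" by (simp add: Up_iff top_greatest)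
  show "Up le {x, c x} \<subseteq> {t}"
  proof
    fix u assume "u \<in> Up le {x, c x}"
    then have "u \<in> Up le ({c x} \<union> Lo le {x, x})"
      by (auto simp: Lo_iff Up_iff intro: trans)
    then have "t \<preceq> u" using \<open>t \<in> R x x\<close> by (simp add: R_eq Lo_iff)
    then show "u \<in> {t}" using antisym top_greatest by blast
  qed
qed

lemma orthomodular_law:
  assumes div: "operator_divisibility le R"
    and R_eq: "\<And>x y. R x y = Lo le (Up le ({c x} \<union> Lo le {x, y}))"
    and involution: "\<And>x. c (c x) = x"
    and "x \<preceq> y"
  shows "Up le {y} = Up le ({x} \<union> Lo le {c x, y})"
proof (rule set_eqI, rule iffI)
  fix v assume "v \<in> Up le {y}"
  then show "v \<in> Up le ({x} \<union> Lo le {c x, y})"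
    using \<open>x \<preceq> y\<close> by (auto simp: Lo_iff Up_iff intro: trans)
next
  fix v assume v: "v \<in> Up le ({x} \<union> Lo le {c x, y})"
  have compl_le_iff: "c a \<preceq> c b \<longleftrightarrow> b \<preceq> a" for a b
    by (metis antitone involution)
  have "c v \<in> Lo le ({c x} \<union> Up le (R (c x) (c y)))"
  proof -
    have "c v \<preceq> a" if "a \<in> Up le (R (c x) (c y))" for a
    proof -
      have "x \<in> R (c x) (c y)" "c y \<in> R (c x) (c y)"
        using \<open>x \<preceq> y\<close> by (auto simp: R_eq involution Lo_iff Up_iff compl_le_iff refl)
      then have "x \<preceq> a" "c y \<preceq> a" using that by (auto simp: Up_iff)
      then have "c a \<in> Lo le {c x, y}"
        by (metis Lo_iff antitone involution insert_iff singletonD)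
      then show "c v \<preceq> a" using v by (metis Un_iff Up_iff compl_le_iff involution)
    qed
    moreover have "c v \<preceq> c x" using v by (simp add: Up_iff compl_le_iff)
    ultimately show ?thesis by (auto simp: Lo_iff)
  qed
  then have "c v \<preceq> c y"
    by (rule divisibility_le[OF div antitone[OF \<open>x \<preceq> y\<close>]])
  then show "v \<in> Up le {y}" by (simp add: Up_iff compl_le_iff)
qed

end

theorem mainTheorem3:
  fixes le :: "'a \<Rightarrow> 'a \<Rightarrow> bool" and c :: "'a \<Rightarrow> 'a"
    and M R :: "'a \<Rightarrow> 'a \<Rightarrow> 'a set" and z t :: 'a
  assumes "operator_residuated_poset le c M R z t"
    and "operator_divisibility le R"
    and "\<And>x y. M x y = Lo le (Up le {x, c y} \<union> {y})"
    and "\<And>x y. R x y = Lo le (Up le ({c x} \<union> Lo le {x, y}))"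
  shows "generalized_orthomodular_poset le c z t"
proof -
  interpret operator_residuated le c M R z t by (rule operator_residuated.intro) (fact assms(1))
  have "Up le {t, c y} = {t}" for y
    by (auto simp: Up_iff refl top_greatest intro: antisym)
  then have "y \<in> M t y" for y
    by (simp add: assms(3) Lo_iff refl top_greatest)
  then have involution: "c (c x) = x" for x by (rule double_compl_eq)
  have "Up le {x, c x} = {t}" for x
    using assms(4) R_double_compl(1)[of x] by (intro Up_compl_eq_top) (simp_all add: involution)
  then show ?thesis
    using bounded_poset antitone involution Lo_compl_eq_bot[OF assms(2)]
      orthomodular_law[OF assms(2,4) involution]
    by (simp add: generalized_orthomodular_poset_def orthoposet_def antitone_op_def)
qed

end
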